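(* Let $(M,\|\cdot\|)$ be a normed space, $d(x,y)=\|x-y\|$, with size notion $s(x)=\|x\|$. Then $\mathrm{AH}_d$ is a pseudo-metric on $\mathcal{P}(M)$ (reflexive, symmetric, and satisfying the triangle inequality).
   Context: For $X,Y\subseteq M$, \[ \overrightarrow{\mathrm{AH}}_{d}(X,Y)=\lim_{k\to\infty}\ \sup_{x\in X,\ \|x\|\ge k}\ \inf_{y\in Y} \|x-y\|,\qquad \mathrm{AH}_d(X,Y)=\max\{\overrightarrow{\mathrm{AH}}_{d}(X,Y),\overrightarrow{\mathrm{AH}}_{d}(Y,X)\}, \] with the supremum over the empty set equal to $0$ and values in $[0,+\infty]$ (the infimum over the empty set being $+\infty=\sup d$ when $M\neq\{0\}$). *)

theory Defs
  imports "HOL-Analysis.Analysis"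
begin

text \<open>The supremum over the empty set is 0
  (realised by inserting 0, harmless since all values are nonnegative);
  the infimum over the empty set is +infinity.\<close>

definition AH_dir :: "'a::real_normed_vector set \<Rightarrow> 'a set \<Rightarrow> ereal" where
  "AH_dir X Y = Lim at_top (\<lambda>k::real.
      Sup (insert 0 ((\<lambda>x. INF y\<in>Y. ereal (norm (x - y))) ` {x\<in>X. norm x \<ge> k})))"

definition AH :: "'a::real_normed_vector set \<Rightarrow> 'a set \<Rightarrow> ereal" where
  "AH X Y = max (AH_dir X Y) (AH_dir Y X)"

end

theory Submission
  imports Defs
begin

(* The tail suprema decrease in the threshold k, so the limit defining the directed distance
   is their infimum; reflexivity and symmetry are then immediate. For the triangle inequality,
   take thresholds k1, k2 at which the tails of (X, Y) and (Y, Z) are below a and b. A point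
   x of X with norm x >= max k1 (k2 + a) has some y in Y with norm (x - y) < a; then
   norm y >= k2, so y has some z in Z with norm (y - z) < b. Hence the tail of (X, Z) beyond
   max k1 (k2 + a) is at most a + b. *)

lemma Lim_at_top_antimono:
  fixes f :: "'a::{linorder,no_top} \<Rightarrow> 'b::{complete_linorder,linorder_topology}"
  assumes "antimono f"
  shows "Lim at_top f = (INF k. f k)"
proof (rule tendsto_Lim)
  show "(f \<longlongrightarrow> (INF k. f k)) at_top"
  proof (rule decreasing_tendsto)
    fix a assume "(INF k. f k) < a"
    then obtain k where "f k < a" by (auto simp: INF_less_iff)
    with assms show "eventually (\<lambda>l. f l < a) at_top"
      by (auto simp: eventually_at_top_linorder antimono_def intro: le_less_trans)
  qed (auto intro: INF_lower eventuallyI)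
qed simp

lemma ereal_le_add_by_real_bounds:
  fixes x y z :: ereal
  assumes "0 \<le> x" "0 \<le> y"
    and bound: "\<And>a b. x < ereal a \<Longrightarrow> y < ereal b \<Longrightarrow> z \<le> ereal (a + b)"
  shows "z \<le> x + y"
proof (cases "x = \<infinity> \<or> y = \<infinity>")
  case True
  with assms show ?thesis by auto
next
  case False
  with assms obtain a b where ab: "x = ereal a" "y = ereal b"
    by (cases x; cases y) auto
  show ?thesis
  proof (rule ereal_le_epsilon2)
    fix e :: real assume "0 < e"
    then have "z \<le> ereal ((a + e / 2) + (b + e / 2))"
      using ab by (intro bound) auto
    then show "z \<le> x + y + ereal e" using ab by (simp add: algebra_simps)
  qed
qed

definition ereal_infdist :: "'a::real_normed_vector \<Rightarrow> 'a set \<Rightarrow> ereal" where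
  "ereal_infdist x Y = (INF y\<in>Y. ereal (norm (x - y)))"

definition AH_tail :: "'a::real_normed_vector set \<Rightarrow> 'a set \<Rightarrow> real \<Rightarrow> ereal" where
  "AH_tail X Y k = Sup (insert 0 ((\<lambda>x. ereal_infdist x Y) ` {x\<in>X. k \<le> norm x}))"

lemma ereal_infdist_self: "x \<in> Y \<Longrightarrow> ereal_infdist x Y = 0"
  unfolding ereal_infdist_def by (auto intro!: antisym INF_lower2 INF_greatest)

lemma ereal_infdist_less_iff: "ereal_infdist x Y < c \<longleftrightarrow> (\<exists>y\<in>Y. ereal (norm (x - y)) < c)"
  unfolding ereal_infdist_def by (rule INF_less_iff)

lemma ereal_infdist_le_AH_tail: "x \<in> X \<Longrightarrow> k \<le> norm x \<Longrightarrow> ereal_infdist x Y \<le> AH_tail X Y k"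
  unfolding AH_tail_def by (intro Sup_upper) auto

lemma AH_tail_nonneg: "0 \<le> AH_tail X Y k"
  unfolding AH_tail_def by (auto intro: Sup_upper)

lemma AH_tail_antimono: "antimono (AH_tail X Y)"
  unfolding AH_tail_def by (intro antimonoI Sup_subset_mono image_mono insert_mono) auto

lemma AH_dir_eq_INF_AH_tail: "AH_dir X Y = (INF k. AH_tail X Y k)"
  unfolding AH_dir_def ereal_infdist_def[symmetric] AH_tail_def[symmetric]
  by (rule Lim_at_top_antimono[OF AH_tail_antimono])

lemma AH_dir_self: "AH_dir X X = 0"
proof -
  have "AH_tail X X k = 0" for k
    unfolding AH_tail_def by (auto simp: ereal_infdist_self intro!: antisym Sup_least)
  then show ?thesis by (simp add: AH_dir_eq_INF_AH_tail)
qed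

lemma AH_dir_nonneg: "0 \<le> AH_dir X Y"
  unfolding AH_dir_eq_INF_AH_tail by (auto intro: INF_greatest AH_tail_nonneg)

lemma AH_dir_less_iff: "AH_dir X Y < c \<longleftrightarrow> (\<exists>k. AH_tail X Y k < c)"
  unfolding AH_dir_eq_INF_AH_tail INF_less_iff by simp

lemma AH_dir_le_AH_tail: "AH_dir X Y \<le> AH_tail X Y k"
  unfolding AH_dir_eq_INF_AH_tail by (simp add: INF_lower)

lemma AH_tail_triangle:
  assumes XY: "AH_tail X Y k\<^sub>1 < ereal a" and YZ: "AH_tail Y Z k\<^sub>2 < ereal b"
  shows "AH_tail X Z (max k\<^sub>1 (k\<^sub>2 + a)) \<le> ereal (a + b)"
proof -
  have "0 \<le> ereal (a + b)"
    using le_less_trans[OF AH_tail_nonneg XY] le_less_trans[OF AH_tail_nonneg YZ] by simp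
  moreover have "ereal_infdist x Z \<le> ereal (a + b)"
    if x: "x \<in> X" "k\<^sub>1 \<le> norm x" "k\<^sub>2 + a \<le> norm x" for x
  proof -
    have "ereal_infdist x Y < ereal a"
      using ereal_infdist_le_AH_tail[OF x(1,2)] XY by (rule le_less_trans)
    then obtain y where y: "y \<in> Y" "norm (x - y) < a"
      by (auto simp: ereal_infdist_less_iff)
    have "k\<^sub>2 \<le> norm y"
      using x(3) y(2) norm_triangle_ineq2[of x y] by linarith
    then have "ereal_infdist y Z < ereal b"
      using ereal_infdist_le_AH_tail[OF y(1)] YZ by (blast intro: le_less_trans)
    then obtain z where z: "z \<in> Z" "norm (y - z) < b"
      by (auto simp: ereal_infdist_less_iff)
    have "norm (x - z) \<le> a + b"
      using norm_diff_triangle_le[of x y _ z] y(2) z(2) by fastforce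
    then show ?thesis
      unfolding ereal_infdist_def by (intro INF_lower2[OF z(1)]) simp
  qed
  ultimately show ?thesis
    unfolding AH_tail_def by (auto intro!: Sup_least)
qed

lemma AH_dir_triangle: "AH_dir X Z \<le> AH_dir X Y + AH_dir Y Z"
proof (rule ereal_le_add_by_real_bounds[OF AH_dir_nonneg AH_dir_nonneg])
  fix a b assume "AH_dir X Y < ereal a" "AH_dir Y Z < ereal b"
  then obtain k\<^sub>1 k\<^sub>2 where "AH_tail X Y k\<^sub>1 < ereal a" "AH_tail Y Z k\<^sub>2 < ereal b"
    by (auto simp: AH_dir_less_iff)
  then show "AH_dir X Z \<le> ereal (a + b)"
    by (rule order_trans[OF AH_dir_le_AH_tail AH_tail_triangle])
qed

theorem mainTheorem4:
  fixes X Y Z :: "'a::real_normed_vector set"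
  shows "AH X X = 0 \<and> AH X Y = AH Y X \<and> AH X Z \<le> AH X Y + AH Y Z"
proof (intro conjI)
  show "AH X X = 0" by (simp add: AH_def AH_dir_self)
  show "AH X Y = AH Y X" by (simp add: AH_def max.commute)
  have "AH_dir X Z \<le> AH X Y + AH Y Z"
    using AH_dir_triangle[of X Z Y] by (rule order_trans) (simp add: AH_def add_mono)
  moreover have "AH_dir Z X \<le> AH X Y + AH Y Z"
    using AH_dir_triangle[of Z X Y] by (rule order_trans) (simp add: AH_def add.commute add_mono)
  ultimately show "AH X Z \<le> AH X Y + AH Y Z"
    by (simp add: AH_def)
qed

end
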